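(* Let $\mathcal{S} \subseteq M_n$ be a quantum graph. Then $\mathcal{S}$ is connected if and only if the classical graph $C_v(\mathcal{S})$ is connected for every orthonormal basis $v=(|v_k\rangle)_{k=1}^n$ of $\mathbb{C}^n$.
   Context: $M_n$ denotes the $n\times n$ complex matrices. A quantum graph on $M_n$ is a linear subspace $\mathcal{S}\subseteq M_n$ closed under adjoints and containing $I_n$; it is connected if $\mathcal{S}^m=M_n$ for some $m\in\mathbb{N}$, where $\mathcal{S}^1=\mathcal{S}$ and $\mathcal{S}^{k+1}=\operatorname{span}\{AB: A\in\mathcal{S}^k, B\in\mathcal{S}\}$. For an ordered orthonormal basis $v=(|v_k\rangle)_{k=1}^n$ of $\mathbb{C}^n$, the confusability graph $C_v(\mathcal{S})$ is the classical graph on vertex set $\{1,\dots,n\}$ in which distinct $i,j$ are adjacent exactly when $\langle v_i|A|v_j\rangle\neq0$ for some $A\in\mathcal{S}$. *)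

theory Defs
  imports "Jordan_Normal_Form.Schur_Decomposition"
begin

inductive_set mat_span :: "nat \<Rightarrow> complex mat set \<Rightarrow> complex mat set"
  for n :: nat and T :: "complex mat set" where
  zero: "0\<^sub>m n n \<in> mat_span n T"
| gen: "A \<in> T \<Longrightarrow> A \<in> mat_span n T"
| add: "A \<in> mat_span n T \<Longrightarrow> B \<in> mat_span n T \<Longrightarrow> A + B \<in> mat_span n T"
| smult: "A \<in> mat_span n T \<Longrightarrow> c \<cdot>\<^sub>m A \<in> mat_span n T"

definition mat_subspace :: "nat \<Rightarrow> complex mat set \<Rightarrow> bool" where
  "mat_subspace n S \<longleftrightarrow> S \<subseteq> carrier_mat n n \<and> 0\<^sub>m n n \<in> S
     \<and> (\<forall>A\<in>S. \<forall>B\<in>S. A + B \<in> S) \<and> (\<forall>c. \<forall>A\<in>S. c \<cdot>\<^sub>m A \<in> S)"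

definition quantum_graph :: "nat \<Rightarrow> complex mat set \<Rightarrow> bool" where
  "quantum_graph n S \<longleftrightarrow> mat_subspace n S \<and> (\<forall>A\<in>S. mat_adjoint A \<in> S) \<and> 1\<^sub>m n \<in> S"

text \<open>Powers: qg_pow n S k is S^(k+1); S^1 = S, S^(k+1) = span {AB : A in S^k, B in S}.\<close>
fun qg_pow :: "nat \<Rightarrow> complex mat set \<Rightarrow> nat \<Rightarrow> complex mat set" where
  "qg_pow n S 0 = S"
| "qg_pow n S (Suc k) = mat_span n {A * B | A B. A \<in> qg_pow n S k \<and> B \<in> S}"

definition qg_connected :: "nat \<Rightarrow> complex mat set \<Rightarrow> bool" where
  "qg_connected n S \<longleftrightarrow> (\<exists>k. qg_pow n S k = carrier_mat n n)"

text \<open>Ordered orthonormal basis v_0, ..., v_(n-1) of C^n (n orthonormal vectors in C^n).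
  The inner product v \<bullet>c w = sum_i v_i conj(w_i).\<close>
definition orthonormal_basis :: "nat \<Rightarrow> (nat \<Rightarrow> complex vec) \<Rightarrow> bool" where
  "orthonormal_basis n v \<longleftrightarrow> (\<forall>k<n. v k \<in> carrier_vec n)
     \<and> (\<forall>i<n. \<forall>j<n. v j \<bullet>c v i = (if i = j then 1 else 0))"

text \<open>Edge relation of the confusability graph C_v(S) on vertices {0..<n}:
  i ~ j iff i \<noteq> j and <v_i|A|v_j> \<noteq> 0 for some A in S, where <v_i|A|v_j> = (A v_j) \<bullet>c v_i.\<close>
definition conf_edge :: "nat \<Rightarrow> (nat \<Rightarrow> complex vec) \<Rightarrow> complex mat set \<Rightarrow> nat \<Rightarrow> nat \<Rightarrow> bool" where
  "conf_edge n v S i j \<longleftrightarrow> i < n \<and> j < n \<and> i \<noteq> j \<and> (\<exists>A\<in>S. (A *\<^sub>v v j) \<bullet>c v i \<noteq> 0)"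

definition graph_connected :: "nat \<Rightarrow> (nat \<Rightarrow> nat \<Rightarrow> bool) \<Rightarrow> bool" where
  "graph_connected n E \<longleftrightarrow> (\<forall>i<n. \<forall>j<n. E\<^sup>*\<^sup>* i j)"

end

theory Submission
  imports Defs "Jordan_Normal_Form.Spectral_Radius"
begin

(*
  If S^k = M_n but C_v(S) is disconnected, let P be a connected component.  In the basis v every
  element of S has zero entries in the rows of P and the columns outside P; this property survives
  linear combinations and products, so it holds on S^k, yet the rank-one matrix |v_i><v_j| with
  i in P and j outside P violates it.

  Conversely, the increasing chain of subspaces S^k stabilises, so A = S^k satisfies A S <= A and
  contains the identity.  Since S is closed under adjoints, the orthogonal complement of A for the
  Hilbert-Schmidt inner product is also invariant under right multiplication by S, so the
  orthogonal projection onto A is a right S-module map.  Written in matrix units, such a map is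
  determined by n^2 matrices that commute with S.  If all of them are scalar, the projection is
  left multiplication by a fixed matrix, which must be the identity because the projection fixes
  the identity; then A = M_n.  Otherwise some non-scalar M commutes with S, an eigenspace of M is a
  proper nonzero subspace invariant under S = S*, and an orthonormal basis adapted to this
  subspace makes C_v(S) disconnected.
*)

section \<open>Inner products and adjoints\<close>

lemma cscalar_prod_eq_sum:
  assumes "x \<in> carrier_vec N" "y \<in> carrier_vec N"
  shows "x \<bullet>c y = (\<Sum>r<N. x $ r * cnj (y $ r))"
  using assms by (simp add: scalar_prod_def atLeast0LessThan)

lemma cscalar_prod_swap:
  fixes x y :: "complex vec"
  assumes "x \<in> carrier_vec N" "y \<in> carrier_vec N"
  shows "x \<bullet>c y = cnj (y \<bullet>c x)"
  using assms by (simp add: cscalar_prod_eq_sum[of _ N] mult.commute)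

lemma cscalar_prod_smult_right:
  fixes x y :: "complex vec"
  assumes "x \<in> carrier_vec N" "y \<in> carrier_vec N"
  shows "x \<bullet>c (c \<cdot>\<^sub>v y) = cnj c * (x \<bullet>c y)"
  using assms by (simp add: conjugate_smult_vec)

lemma cscalar_prod_minus_left:
  fixes x p y :: "complex vec"
  assumes "x \<in> carrier_vec N" "p \<in> carrier_vec N" "y \<in> carrier_vec N"
  shows "(x - p) \<bullet>c y = x \<bullet>c y - p \<bullet>c y"
  using assms by (simp add: minus_scalar_prod_distrib[of _ N])

lemma cscalar_prod_self_pos:
  fixes y :: "complex vec"
  assumes "y \<in> carrier_vec N" "y \<noteq> 0\<^sub>v N"
  obtains t where "t > 0" "y \<bullet>c y = complex_of_real t"
proof -
  have "y \<bullet>c y > 0" using assms by simp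
  then show ?thesis
    using that[of "Re (y \<bullet>c y)"] by (simp add: less_complex_def complex_eq_iff)
qed

lemma sum_lessThan_if_less:
  fixes f :: "nat \<Rightarrow> 'a::comm_monoid_add"
  assumes "N \<le> K"
  shows "(\<Sum>r<K. if r < N then f r else 0) = (\<Sum>r<N. f r)"
proof -
  have "(\<Sum>r<K. if r < N then f r else 0) = sum f ({..<K} \<inter> {r. r < N})"
    by (simp add: sum.inter_restrict)
  also have "{..<K} \<inter> {r. r < N} = {..<N}" using assms by auto
  finally show ?thesis .
qed

lemma index_mult_mat_sum:
  assumes "A \<in> carrier_mat n k" "B \<in> carrier_mat k m" "i < n" "j < m"
  shows "(A * B) $$ (i, j) = (\<Sum>r<k. A $$ (i, r) * B $$ (r, j))"
  using assms by (simp add: scalar_prod_def atLeast0LessThan)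

lemma index_mult_mat_vec_sum:
  assumes "A \<in> carrier_mat n k" "x \<in> carrier_vec k" "i < n"
  shows "(A *\<^sub>v x) $ i = (\<Sum>r<k. A $$ (i, r) * x $ r)"
  using assms by (simp add: scalar_prod_def atLeast0LessThan)

lemma mat_adjoint_dim [simp]:
  "dim_row (mat_adjoint A) = dim_col A" "dim_col (mat_adjoint A) = dim_row A"
  unfolding mat_adjoint_def by (simp_all add: mat_of_rows_def)

lemma mat_adjoint_carrier: "A \<in> carrier_mat n m \<Longrightarrow> mat_adjoint A \<in> carrier_mat m n"
  by auto

lemma index_mat_adjoint:
  "A \<in> carrier_mat n m \<Longrightarrow> i < m \<Longrightarrow> j < n \<Longrightarrow> mat_adjoint A $$ (i, j) = cnj (A $$ (j, i))"
  unfolding mat_adjoint_def by (auto simp: mat_of_rows_def)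

lemma cscalar_prod_mat_adjoint:
  fixes a :: "complex mat"
  assumes a: "a \<in> carrier_mat n n" and x: "x \<in> carrier_vec n" and w: "w \<in> carrier_vec n"
  shows "(a *\<^sub>v x) \<bullet>c w = x \<bullet>c (mat_adjoint a *\<^sub>v w)"
proof -
  have aH: "mat_adjoint a \<in> carrier_mat n n" using a by (rule mat_adjoint_carrier)
  have "(a *\<^sub>v x) \<bullet>c w = (\<Sum>r<n. \<Sum>s<n. a $$ (r, s) * x $ s * cnj (w $ r))"
    using a x w by (simp add: cscalar_prod_eq_sum[of _ n] index_mult_mat_vec_sum[of _ n n]
        sum_distrib_right del: index_mult_mat_vec)
  also have "\<dots> = (\<Sum>s<n. \<Sum>r<n. a $$ (r, s) * x $ s * cnj (w $ r))"
    by (rule sum.swap)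
  also have "\<dots> = x \<bullet>c (mat_adjoint a *\<^sub>v w)"
    using aH x w by (simp add: cscalar_prod_eq_sum[of _ n] index_mult_mat_vec_sum[of _ n n]
        index_mat_adjoint[OF a] sum_distrib_left mult_ac del: index_mult_mat_vec)
  finally show ?thesis .
qed

section \<open>Orthonormal families and orthogonal projections\<close>

definition orthonormal_family :: "nat \<Rightarrow> nat \<Rightarrow> (nat \<Rightarrow> complex vec) \<Rightarrow> bool" where
  "orthonormal_family N m F \<longleftrightarrow> (\<forall>k<m. F k \<in> carrier_vec N)
     \<and> (\<forall>i<m. \<forall>j<m. F j \<bullet>c F i = (if i = j then 1 else 0))"

lemma orthonormal_basis_iff_family: "orthonormal_basis n v \<longleftrightarrow> orthonormal_family n n v"
  unfolding orthonormal_basis_def orthonormal_family_def ..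

definition orth_proj :: "nat \<Rightarrow> nat \<Rightarrow> (nat \<Rightarrow> complex vec) \<Rightarrow> complex vec \<Rightarrow> complex vec" where
  "orth_proj N m F x = vec N (\<lambda>r. \<Sum>i<m. (x \<bullet>c F i) * F i $ r)"

lemma orth_proj_carrier [simp]: "orth_proj N m F x \<in> carrier_vec N"
  by (simp add: orth_proj_def)

lemma orth_proj_dim [simp]: "dim_vec (orth_proj N m F x) = N"
  by (simp add: orth_proj_def)

lemma orth_proj_0: "orth_proj N 0 F x = 0\<^sub>v N"
  by (rule eq_vecI) (auto simp: orth_proj_def)

lemma orth_proj_Suc:
  assumes "F m \<in> carrier_vec N"
  shows "orth_proj N (Suc m) F x = orth_proj N m F x + (x \<bullet>c F m) \<cdot>\<^sub>v F m"
  using assms by (intro eq_vecI) (auto simp: orth_proj_def)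

lemma orth_proj_cong: "(\<And>i. i < m \<Longrightarrow> F i = G i) \<Longrightarrow> orth_proj N m F x = orth_proj N m G x"
  unfolding orth_proj_def by simp

lemma cscalar_prod_orth_proj_left:
  assumes "\<forall>k<m. F k \<in> carrier_vec N" "y \<in> carrier_vec N"
  shows "orth_proj N m F x \<bullet>c y = (\<Sum>j<m. (x \<bullet>c F j) * (F j \<bullet>c y))"
proof -
  have "orth_proj N m F x \<bullet>c y = (\<Sum>r<N. (\<Sum>j<m. (x \<bullet>c F j) * F j $ r) * cnj (y $ r))"
    using assms by (simp add: cscalar_prod_eq_sum[of _ N] orth_proj_def)
  also have "\<dots> = (\<Sum>j<m. (x \<bullet>c F j) * (\<Sum>r<N. F j $ r * cnj (y $ r)))"
    by (simp add: sum_distrib_left sum_distrib_right mult.assoc sum.swap[of _ "{..<N}"])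
  also have "\<dots> = (\<Sum>j<m. (x \<bullet>c F j) * (F j \<bullet>c y))"
    using assms by (simp add: cscalar_prod_eq_sum[of _ N])
  finally show ?thesis .
qed

lemma cscalar_prod_orth_proj_right:
  assumes "\<forall>k<m. F k \<in> carrier_vec N" "y \<in> carrier_vec N"
  shows "y \<bullet>c orth_proj N m F x = (\<Sum>j<m. cnj (x \<bullet>c F j) * (y \<bullet>c F j))"
proof -
  have "y \<bullet>c orth_proj N m F x = cnj (orth_proj N m F x \<bullet>c y)"
    using assms(2) by (intro cscalar_prod_swap[of _ N]) simp_all
  also have "\<dots> = (\<Sum>j<m. cnj (x \<bullet>c F j) * cnj (F j \<bullet>c y))"
    using assms by (simp add: cscalar_prod_orth_proj_left)
  also have "\<dots> = (\<Sum>j<m. cnj (x \<bullet>c F j) * (y \<bullet>c F j))"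
    using assms by (intro sum.cong refl) (simp add: cscalar_prod_swap[of y N])
  finally show ?thesis .
qed

lemma cscalar_prod_orth_proj_member:
  assumes "orthonormal_family N m F" "i < m"
  shows "orth_proj N m F x \<bullet>c F i = x \<bullet>c F i"
  using assms
  by (simp add: orthonormal_family_def cscalar_prod_orth_proj_left[of m F N] if_distrib[of "(*) _"]
      cong: if_cong)

lemma orth_proj_residual_orthogonal:
  assumes "orthonormal_family N m F" "i < m" "x \<in> carrier_vec N"
  shows "(x - orth_proj N m F x) \<bullet>c F i = 0"
  using assms cscalar_prod_orth_proj_member[OF assms(1,2)]
  by (simp add: cscalar_prod_minus_left[of _ N] orthonormal_family_def)

lemma orth_proj_residual_orthogonal_fixed:
  assumes "orthonormal_family N m F" "x \<in> carrier_vec N" "orth_proj N m F c = c"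
  shows "(x - orth_proj N m F x) \<bullet>c c = 0"
proof -
  have "(x - orth_proj N m F x) \<bullet>c c = (x - orth_proj N m F x) \<bullet>c orth_proj N m F c"
    using assms(3) by simp
  also have "\<dots> = 0"
    using assms(1,2) orth_proj_residual_orthogonal[OF assms(1) _ assms(2)]
    by (simp add: orthonormal_family_def cscalar_prod_orth_proj_right[of m F N])
  finally show ?thesis .
qed

definition vec_subspace :: "nat \<Rightarrow> complex vec set \<Rightarrow> bool" where
  "vec_subspace N V \<longleftrightarrow> V \<subseteq> carrier_vec N \<and> 0\<^sub>v N \<in> V \<and> (\<forall>x\<in>V. \<forall>y\<in>V. x + y \<in> V)
     \<and> (\<forall>c. \<forall>x\<in>V. c \<cdot>\<^sub>v x \<in> V)"

lemma vec_subspace_carrier: "vec_subspace N (carrier_vec N)"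
  by (auto simp: vec_subspace_def)

lemma vec_subspace_minus:
  assumes "vec_subspace N V" "x \<in> V" "y \<in> V"
  shows "x - y \<in> V"
proof -
  have "x - y = x + (-1) \<cdot>\<^sub>v y"
    using assms by (intro eq_vecI) (auto simp: vec_subspace_def)
  then show ?thesis using assms unfolding vec_subspace_def by metis
qed

lemma orth_proj_in_subspace:
  assumes "vec_subspace N V" "\<forall>k<m. F k \<in> V"
  shows "orth_proj N m F x \<in> V"
  using assms(2)
proof (induction m)
  case 0
  then show ?case using assms(1) by (simp add: orth_proj_0 vec_subspace_def)
next
  case (Suc m)
  then have "F m \<in> V" "F m \<in> carrier_vec N" using assms(1) by (auto simp: vec_subspace_def)
  then show ?case using Suc assms(1) by (simp add: orth_proj_Suc vec_subspace_def)
qed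

lemma orthonormal_family_snoc:
  assumes F: "orthonormal_family N m F" and u: "u \<in> carrier_vec N" "u \<bullet>c u = 1"
    and orth: "\<forall>i<m. u \<bullet>c F i = 0"
  shows "orthonormal_family N (Suc m) (F(m := u))"
proof -
  have "F i \<bullet>c u = 0" if "i < m" for i
    using F u orth that by (subst cscalar_prod_swap[of _ N]) (auto simp: orthonormal_family_def)
  then show ?thesis
    using F u orth by (auto simp: orthonormal_family_def less_Suc_eq)
qed

lemma orthonormal_family_extend:
  assumes F: "orthonormal_family N m F" and x: "x \<in> carrier_vec N" and ne: "orth_proj N m F x \<noteq> x"
  obtains c where "orthonormal_family N (Suc m) (F(m := c \<cdot>\<^sub>v (x - orth_proj N m F x)))"
proof -
  define y where "y = x - orth_proj N m F x"
  have y: "y \<in> carrier_vec N" unfolding y_def using x by simp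
  have "y \<noteq> 0\<^sub>v N"
  proof
    assume "y = 0\<^sub>v N"
    then have "(x - orth_proj N m F x) $ i = 0" if "i < N" for i
      using that unfolding y_def by simp
    then have "x = orth_proj N m F x"
      using x by (intro eq_vecI) auto
    then show False using ne by simp
  qed
  then obtain t where t: "t > 0" "y \<bullet>c y = complex_of_real t"
    using cscalar_prod_self_pos[OF y] by blast
  define c where "c = complex_of_real (1 / sqrt t)"
  have "(c \<cdot>\<^sub>v y) \<bullet>c (c \<cdot>\<^sub>v y) = c * cnj c * complex_of_real t"
    using y t(2) by (simp add: cscalar_prod_smult_right[of _ N] mult.assoc)
  also have "\<dots> = 1"
    using t(1) by (simp add: c_def flip: of_real_mult)
  finally have unit: "(c \<cdot>\<^sub>v y) \<bullet>c (c \<cdot>\<^sub>v y) = 1" .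
  have "\<forall>i<m. (c \<cdot>\<^sub>v y) \<bullet>c F i = 0"
    using orth_proj_residual_orthogonal[OF F _ x] F y by (auto simp: orthonormal_family_def y_def)
  from orthonormal_family_snoc[OF F _ unit this] y show ?thesis
    using that unfolding y_def by simp
qed

(* Padding to a square matrix lets mat_mult_left_right_inverse turn a one-sided inverse into a
   two-sided one; a zero row or column of the padding then gives the contradiction. *)
definition frame_mat :: "nat \<Rightarrow> nat \<Rightarrow> nat \<Rightarrow> (nat \<Rightarrow> complex vec) \<Rightarrow> complex mat" where
  "frame_mat K N m F = mat K K (\<lambda>(r, i). if r < N \<and> i < m then F i $ r else 0)"

lemma frame_mat_dim [simp]: "dim_row (frame_mat K N m F) = K" "dim_col (frame_mat K N m F) = K"
  by (simp_all add: frame_mat_def)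

lemma frame_mat_carrier [simp]: "frame_mat K N m F \<in> carrier_mat K K"
  by (simp add: carrier_matI)

lemma index_frame_mat [simp]:
  "r < K \<Longrightarrow> i < K \<Longrightarrow> frame_mat K N m F $$ (r, i) = (if r < N \<and> i < m then F i $ r else 0)"
  by (simp add: frame_mat_def)

lemma frame_mat_gram:
  assumes F: "\<forall>k<m. F k \<in> carrier_vec N" and "N \<le> K" "i < K" "j < K"
  shows "(mat_adjoint (frame_mat K N m F) * frame_mat K N m F) $$ (i, j)
    = (if i < m \<and> j < m then F j \<bullet>c F i else 0)"
proof -
  have "(mat_adjoint (frame_mat K N m F) * frame_mat K N m F) $$ (i, j)
      = (\<Sum>r<K. mat_adjoint (frame_mat K N m F) $$ (i, r) * frame_mat K N m F $$ (r, j))"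
    using assms by (intro index_mult_mat_sum mat_adjoint_carrier) auto
  also have "\<dots> = (\<Sum>r<K. if r < N \<and> i < m \<and> j < m then F j $ r * cnj (F i $ r) else 0)"
    using assms by (intro sum.cong refl)
      (auto simp: index_mat_adjoint[OF frame_mat_carrier] mult.commute)
  also have "\<dots> = (if i < m \<and> j < m then F j \<bullet>c F i else 0)"
    using assms by (auto simp: sum_lessThan_if_less cscalar_prod_eq_sum[of _ N])
  finally show ?thesis .
qed

lemma frame_mat_outer:
  assumes F: "\<forall>k<m. F k \<in> carrier_vec N" and "m \<le> K" "r < K" "s < K"
  shows "(frame_mat K N m F * mat_adjoint (frame_mat K N m F)) $$ (r, s)
    = (if r < N \<and> s < N then orth_proj N m F (unit_vec N s) $ r else 0)"
proof -
  have "(frame_mat K N m F * mat_adjoint (frame_mat K N m F)) $$ (r, s)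
      = (\<Sum>i<K. frame_mat K N m F $$ (r, i) * mat_adjoint (frame_mat K N m F) $$ (i, s))"
    using assms by (intro index_mult_mat_sum mat_adjoint_carrier) auto
  also have "\<dots>
      = (\<Sum>i<K. if i < m then (if r < N \<and> s < N then cnj (F i $ s) * F i $ r else 0) else 0)"
    using assms by (intro sum.cong refl)
      (auto simp: index_mat_adjoint[OF frame_mat_carrier] mult.commute)
  also have "\<dots> = (if r < N \<and> s < N then orth_proj N m F (unit_vec N s) $ r else 0)"
    using assms by (auto simp: sum_lessThan_if_less orth_proj_def intro!: sum.cong)
  finally show ?thesis .
qed

lemma orthonormal_family_length_le:
  assumes F: "orthonormal_family N m F"
  shows "m \<le> N"
proof (rule ccontr)
  assume "\<not> m \<le> N"
  let ?U = "frame_mat m N m F"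
  have Fc: "\<forall>k<m. F k \<in> carrier_vec N" using F by (simp add: orthonormal_family_def)
  have "mat_adjoint ?U * ?U = 1\<^sub>m m"
    using F \<open>\<not> m \<le> N\<close> by (intro eq_matI)
      (auto simp: frame_mat_gram[OF Fc] orthonormal_family_def simp del: index_mult_mat(1))
  then have "?U * mat_adjoint ?U = 1\<^sub>m m"
    by (metis mat_mult_left_right_inverse mat_adjoint_carrier frame_mat_carrier)
  then have "(?U * mat_adjoint ?U) $$ (m - 1, m - 1) = 1"
    using \<open>\<not> m \<le> N\<close> by simp
  moreover have "(?U * mat_adjoint ?U) $$ (m - 1, m - 1) = 0"
    using \<open>\<not> m \<le> N\<close> by (simp add: frame_mat_outer[OF Fc] del: index_mult_mat(1))
  ultimately show False by simp
qed

lemma orthonormal_family_length_ge: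
  assumes F: "orthonormal_family N m F" and complete: "\<forall>x\<in>carrier_vec N. orth_proj N m F x = x"
  shows "N \<le> m"
proof (rule ccontr)
  assume "\<not> N \<le> m"
  let ?U = "frame_mat N N m F"
  have Fc: "\<forall>k<m. F k \<in> carrier_vec N" using F by (simp add: orthonormal_family_def)
  have "?U * mat_adjoint ?U = 1\<^sub>m N"
    using complete \<open>\<not> N \<le> m\<close> by (intro eq_matI)
      (auto simp: frame_mat_outer[OF Fc] simp del: index_mult_mat(1))
  then have "mat_adjoint ?U * ?U = 1\<^sub>m N"
    by (metis mat_mult_left_right_inverse mat_adjoint_carrier frame_mat_carrier)
  then have "(mat_adjoint ?U * ?U) $$ (N - 1, N - 1) = 1"
    using \<open>\<not> N \<le> m\<close> by simp
  moreover have "(mat_adjoint ?U * ?U) $$ (N - 1, N - 1) = 0"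
    using \<open>\<not> N \<le> m\<close> by (simp add: frame_mat_gram[OF Fc] del: index_mult_mat(1))
  ultimately show False by simp
qed

lemma orthonormal_family_extend_in_subspace:
  assumes V: "vec_subspace N V" and F0: "orthonormal_family N k F0" "\<forall>i<k. F0 i \<in> V"
  obtains m F where "k \<le> m" "orthonormal_family N m F" "\<forall>i<k. F i = F0 i" "\<forall>i<m. F i \<in> V"
    "\<forall>x\<in>V. orth_proj N m F x = x"
proof -
  define P where
    "P m \<longleftrightarrow> (\<exists>F. k \<le> m \<and> orthonormal_family N m F \<and> (\<forall>i<k. F i = F0 i) \<and> (\<forall>i<m. F i \<in> V))"
    for m
  have bounded: "P m \<Longrightarrow> m \<le> N" for m
    using orthonormal_family_length_le unfolding P_def by blast
  define m where "m = (GREATEST m. P m)"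
  have "P k" using F0 unfolding P_def by auto
  then have "P m" unfolding m_def by (rule GreatestI_nat) (use bounded in auto)
  then obtain F where F: "k \<le> m" "orthonormal_family N m F" "\<forall>i<k. F i = F0 i" "\<forall>i<m. F i \<in> V"
    unfolding P_def by blast
  have "\<forall>x\<in>V. orth_proj N m F x = x"
  proof (intro ballI, rule ccontr)
    fix x assume x: "x \<in> V" and ne: "orth_proj N m F x \<noteq> x"
    have "x \<in> carrier_vec N" using x V by (auto simp: vec_subspace_def)
    with ne obtain c where c: "orthonormal_family N (Suc m) (F(m := c \<cdot>\<^sub>v (x - orth_proj N m F x)))"
      using orthonormal_family_extend[OF F(2)] by blast
    have "c \<cdot>\<^sub>v (x - orth_proj N m F x) \<in> V"
      using vec_subspace_minus[OF V x orth_proj_in_subspace[OF V F(4)]] V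
      by (simp add: vec_subspace_def)
    then have "P (Suc m)"
      using c F unfolding P_def by (intro exI[of _ "F(m := c \<cdot>\<^sub>v (x - orth_proj N m F x))"]) auto
    then have "Suc m \<le> m"
      unfolding m_def by (rule Greatest_le_nat) (use bounded in auto)
    then show False by simp
  qed
  then show ?thesis by (rule that[OF F])
qed

lemma vec_subspace_orthonormal_basis:
  assumes "vec_subspace N V"
  obtains m F where "orthonormal_family N m F" "\<forall>i<m. F i \<in> V" "\<forall>x\<in>V. orth_proj N m F x = x"
proof -
  have "orthonormal_family N 0 F" for F by (simp add: orthonormal_family_def)
  then obtain m F where "orthonormal_family N m F" "\<forall>i<m. F i \<in> V" "\<forall>x\<in>V. orth_proj N m F x = x"
    by (rule orthonormal_family_extend_in_subspace[OF assms]) auto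
  then show ?thesis by (rule that)
qed

lemma orthonormal_basis_adapted:
  assumes "vec_subspace n W"
  obtains k v where "orthonormal_basis n v" "k \<le> n" "\<forall>i<k. v i \<in> W"
    "\<forall>x\<in>W. orth_proj n k v x = x" "\<forall>x\<in>carrier_vec n. orth_proj n n v x = x"
proof -
  obtain k F where F: "orthonormal_family n k F" "\<forall>i<k. F i \<in> W" "\<forall>x\<in>W. orth_proj n k F x = x"
    using vec_subspace_orthonormal_basis[OF assms] .
  have "\<forall>i<k. F i \<in> carrier_vec n" using F(1) by (simp add: orthonormal_family_def)
  then obtain m v where v: "k \<le> m" "orthonormal_family n m v" "\<forall>i<k. v i = F i"
    "\<forall>x\<in>carrier_vec n. orth_proj n m v x = x"
    by (rule orthonormal_family_extend_in_subspace[OF vec_subspace_carrier F(1)])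
  have "m = n"
    using orthonormal_family_length_le[OF v(2)] orthonormal_family_length_ge[OF v(2,4)] by simp
  moreover have "orth_proj n k v x = orth_proj n k F x" for x
    using v(3) by (intro orth_proj_cong) simp
  ultimately show ?thesis
    using that[of v k] v F(2,3) by (simp add: orthonormal_basis_iff_family)
qed

lemma vec_subspace_chain_stabilizes:
  assumes sub: "\<And>k. vec_subspace N (V k)" and mono: "\<And>k. V k \<subseteq> V (Suc k)"
  shows "\<exists>k. V (Suc k) = V k"
proof (rule ccontr)
  assume "\<nexists>k. V (Suc k) = V k"
  then have grow: "\<exists>x\<in>V (Suc k). x \<notin> V k" for k using mono by blast
  have "\<exists>m F. k \<le> m \<and> orthonormal_family N m F \<and> (\<forall>i<m. F i \<in> V k)" for k
  proof (induction k)
    case 0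
    then show ?case by (intro exI[of _ 0]) (simp add: orthonormal_family_def)
  next
    case (Suc k)
    then obtain m0 F0 where F0: "k \<le> m0" "orthonormal_family N m0 F0" "\<forall>i<m0. F0 i \<in> V k"
      by blast
    obtain m F where F: "m0 \<le> m" "orthonormal_family N m F" "\<forall>i<m0. F i = F0 i"
      "\<forall>i<m. F i \<in> V k" "\<forall>x\<in>V k. orth_proj N m F x = x"
      by (rule orthonormal_family_extend_in_subspace[OF sub F0(2,3)])
    obtain x where x: "x \<in> V (Suc k)" "x \<notin> V k" using grow by blast
    have "x \<in> carrier_vec N" using x sub[of "Suc k"] by (auto simp: vec_subspace_def)
    moreover have proj_in: "orth_proj N m F x \<in> V k" by (rule orth_proj_in_subspace[OF sub F(4)])
    then have "orth_proj N m F x \<noteq> x" using x(2) by auto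
    ultimately obtain c
      where c: "orthonormal_family N (Suc m) (F(m := c \<cdot>\<^sub>v (x - orth_proj N m F x)))"
      by (rule orthonormal_family_extend[OF F(2)])
    have "x - orth_proj N m F x \<in> V (Suc k)"
      using vec_subspace_minus[OF sub x(1)] proj_in mono by blast
    then have "c \<cdot>\<^sub>v (x - orth_proj N m F x) \<in> V (Suc k)"
      using sub by (simp add: vec_subspace_def)
    then have "\<forall>i<Suc m. (F(m := c \<cdot>\<^sub>v (x - orth_proj N m F x))) i \<in> V (Suc k)"
      using F(4) mono by (auto simp: less_Suc_eq)
    with c F(1) F0(1) show ?case by (intro exI[of _ "Suc m"]) auto
  qed
  then obtain m F where "Suc N \<le> m" "orthonormal_family N m F" by blast
  then show False using orthonormal_family_length_le by fastforce
qed

section \<open>Connected quantum graphs have connected confusability graphs\<close>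

lemma orthonormal_basis_frame_mat_unitary:
  assumes "orthonormal_basis n v"
  shows "mat_adjoint (frame_mat n n n v) * frame_mat n n n v = 1\<^sub>m n"
    and "frame_mat n n n v * mat_adjoint (frame_mat n n n v) = 1\<^sub>m n"
proof -
  have v: "\<forall>k<n. v k \<in> carrier_vec n" using assms by (simp add: orthonormal_basis_def)
  show gram: "mat_adjoint (frame_mat n n n v) * frame_mat n n n v = 1\<^sub>m n"
    using assms by (intro eq_matI)
      (auto simp: frame_mat_gram[OF v] orthonormal_basis_def simp del: index_mult_mat(1))
  then show "frame_mat n n n v * mat_adjoint (frame_mat n n n v) = 1\<^sub>m n"
    by (metis mat_mult_left_right_inverse mat_adjoint_carrier frame_mat_carrier)
qed

lemma frame_mat_conjugation_index:
  assumes v: "\<forall>k<n. v k \<in> carrier_vec n" and X: "X \<in> carrier_mat n n" and "i < n" "j < n"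
  shows "(mat_adjoint (frame_mat n n n v) * (X * frame_mat n n n v)) $$ (i, j) = (X *\<^sub>v v j) \<bullet>c v i"
proof -
  let ?U = "frame_mat n n n v"
  have "col ?U j = v j" using assms by (intro eq_vecI) auto
  moreover have "row (mat_adjoint ?U) i = conjugate (v i)"
    using assms by (intro eq_vecI) (auto simp: index_mat_adjoint[OF frame_mat_carrier])
  ultimately show ?thesis
    using assms by (simp add: col_mult2[OF X frame_mat_carrier] conjugate_vec_sprod_comm[of _ n]
        mat_adjoint_carrier)
qed

lemma orthonormal_basis_coeff_mult:
  assumes v: "orthonormal_basis n v" and X: "X \<in> carrier_mat n n" and Y: "Y \<in> carrier_mat n n"
    and ij: "i < n" "j < n"
  shows "((X * Y) *\<^sub>v v j) \<bullet>c v i = (\<Sum>r<n. ((X *\<^sub>v v r) \<bullet>c v i) * ((Y *\<^sub>v v j) \<bullet>c v r))"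
proof -
  let ?U = "frame_mat n n n v" and ?H = "mat_adjoint (frame_mat n n n v)"
  have vc: "\<forall>k<n. v k \<in> carrier_vec n" using v by (simp add: orthonormal_basis_def)
  have U: "?U \<in> carrier_mat n n" and H: "?H \<in> carrier_mat n n" by (auto intro: mat_adjoint_carrier)
  have UH: "?U * (?H * Z) = Z" if "Z \<in> carrier_mat n n" for Z
    using that U H by (simp add: assoc_mult_mat[of _ n n _ n _ n, symmetric]
        orthonormal_basis_frame_mat_unitary(2)[OF v])
  have "?H * (X * Y * ?U) = (?H * (X * ?U)) * (?H * (Y * ?U))"
    using X Y U H by (simp add: assoc_mult_mat[of _ n n _ n _ n] UH)
  then have "((X * Y) *\<^sub>v v j) \<bullet>c v i = ((?H * (X * ?U)) * (?H * (Y * ?U))) $$ (i, j)"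
    using X Y ij by (simp add: frame_mat_conjugation_index[OF vc, symmetric] del: index_mult_mat(1))
  also have "\<dots> = (\<Sum>r<n. (?H * (X * ?U)) $$ (i, r) * (?H * (Y * ?U)) $$ (r, j))"
    using X Y U H ij by (intro index_mult_mat_sum) auto
  also have "\<dots> = (\<Sum>r<n. ((X *\<^sub>v v r) \<bullet>c v i) * ((Y *\<^sub>v v j) \<bullet>c v r))"
    using X Y ij by (intro sum.cong refl)
      (simp add: frame_mat_conjugation_index[OF vc] del: index_mult_mat(1))
  finally show ?thesis .
qed

definition respects_cut :: "nat \<Rightarrow> (nat \<Rightarrow> complex vec) \<Rightarrow> nat set \<Rightarrow> complex mat \<Rightarrow> bool" where
  "respects_cut n v P X \<longleftrightarrow> X \<in> carrier_mat n n \<and>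
     (\<forall>i<n. \<forall>j<n. i \<in> P \<longrightarrow> j \<notin> P \<longrightarrow> (X *\<^sub>v v j) \<bullet>c v i = 0)"

lemma respects_cut_mat_span:
  assumes v: "\<forall>k<n. v k \<in> carrier_vec n" and T: "\<forall>A\<in>T. respects_cut n v P A"
    and X: "X \<in> mat_span n T"
  shows "respects_cut n v P X"
  using X
proof (induction rule: mat_span.induct)
  case zero
  have "0\<^sub>m n n *\<^sub>v v j = 0\<^sub>v n" if "j < n" for j using v that by (intro eq_vecI) auto
  then show ?case using v by (simp add: respects_cut_def)
next
  case (gen A)
  then show ?case using T by blast
next
  case (add A B)
  then have "A \<in> carrier_mat n n" "B \<in> carrier_mat n n" by (simp_all add: respects_cut_def)
  then have "((A + B) *\<^sub>v v j) \<bullet>c v i = (A *\<^sub>v v j) \<bullet>c v i + (B *\<^sub>v v j) \<bullet>c v i"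
    if "i < n" "j < n" for i j
    using v that by (simp add: add_mult_distrib_mat_vec[of _ n n] add_scalar_prod_distrib[of _ n])
  with add.IH show ?case by (simp add: respects_cut_def)
next
  case (smult A c)
  have smult_vec: "(c \<cdot>\<^sub>m A) *\<^sub>v v j = c \<cdot>\<^sub>v (A *\<^sub>v v j)" if "j < n" for j
    using smult v that by (intro eq_vecI) (auto simp: respects_cut_def)
  have "((c \<cdot>\<^sub>m A) *\<^sub>v v j) \<bullet>c v i = c * ((A *\<^sub>v v j) \<bullet>c v i)" if "i < n" "j < n" for i j
  proof -
    have "A *\<^sub>v v j \<in> carrier_vec n"
      using smult(2) v[rule_format, OF that(2)] unfolding respects_cut_def
      by (metis mult_mat_vec_carrier)
    moreover have "conjugate (v i) \<in> carrier_vec n" using v that by simp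
    ultimately show ?thesis using that by (simp add: smult_vec)
  qed
  with smult(2) show ?case by (simp add: respects_cut_def)
qed

lemma respects_cut_mult:
  assumes v: "orthonormal_basis n v" and X: "respects_cut n v P X" and Y: "respects_cut n v P Y"
  shows "respects_cut n v P (X * Y)"
proof -
  have Xc: "X \<in> carrier_mat n n" and Yc: "Y \<in> carrier_mat n n"
    using X Y by (auto simp: respects_cut_def)
  have "((X * Y) *\<^sub>v v j) \<bullet>c v i = 0" if "i < n" "j < n" "i \<in> P" "j \<notin> P" for i j
  proof -
    have "((X *\<^sub>v v r) \<bullet>c v i) * ((Y *\<^sub>v v j) \<bullet>c v r) = 0" if "r < n" for r
      using X Y \<open>i < n\<close> \<open>j < n\<close> \<open>i \<in> P\<close> \<open>j \<notin> P\<close> that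
      by (cases "r \<in> P") (auto simp: respects_cut_def)
    then show ?thesis
      using that by (simp add: orthonormal_basis_coeff_mult[OF v Xc Yc] sum.neutral)
  qed
  then show ?thesis using Xc Yc by (simp add: respects_cut_def)
qed

lemma respects_cut_qg_pow:
  assumes v: "orthonormal_basis n v" and S: "\<forall>A\<in>S. respects_cut n v P A"
  shows "\<forall>X\<in>qg_pow n S k. respects_cut n v P X"
proof (induction k)
  case 0
  then show ?case using S by simp
next
  case (Suc k)
  have vc: "\<forall>k<n. v k \<in> carrier_vec n" using v by (simp add: orthonormal_basis_def)
  have "\<forall>X\<in>{A * B |A B. A \<in> qg_pow n S k \<and> B \<in> S}. respects_cut n v P X"
    using Suc.IH S respects_cut_mult[OF v] by blast
  then show ?case
    unfolding qg_pow.simps using respects_cut_mat_span[OF vc] by blast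
qed

lemma respects_cut_reachable:
  assumes "A \<in> S" "A \<in> carrier_mat n n"
  shows "respects_cut n v {j. (conf_edge n v S)\<^sup>*\<^sup>* i0 j} A"
  unfolding respects_cut_def
proof (intro conjI allI impI)
  fix i j assume "i < n" "j < n"
    "i \<in> {j. (conf_edge n v S)\<^sup>*\<^sup>* i0 j}" "j \<notin> {j. (conf_edge n v S)\<^sup>*\<^sup>* i0 j}"
  moreover from this have "\<not> conf_edge n v S i j"
    using rtranclp.rtrancl_into_rtrancl[of "conf_edge n v S" i0 i j] by blast
  ultimately show "(A *\<^sub>v v j) \<bullet>c v i = 0"
    using assms by (auto simp: conf_edge_def)
qed (fact assms(2))

lemma qg_connected_imp_conf_connected:
  assumes S: "quantum_graph n S" and full: "qg_pow n S k = carrier_mat n n"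
    and v: "orthonormal_basis n v"
  shows "graph_connected n (conf_edge n v S)"
  unfolding graph_connected_def
proof (intro allI impI, rule ccontr)
  fix i0 j0 assume ij0: "i0 < n" "j0 < n" and "\<not> (conf_edge n v S)\<^sup>*\<^sup>* i0 j0"
  let ?P = "{j. (conf_edge n v S)\<^sup>*\<^sup>* i0 j}"
  have vc: "\<forall>k<n. v k \<in> carrier_vec n" and unit: "v j0 \<bullet>c v j0 = 1" "v i0 \<bullet>c v i0 = 1"
    using v ij0 by (auto simp: orthonormal_basis_def)
  have "S \<subseteq> carrier_mat n n" using S by (simp add: quantum_graph_def mat_subspace_def)
  then have "\<forall>X\<in>qg_pow n S k. respects_cut n v ?P X"
    by (intro respects_cut_qg_pow[OF v]) (auto intro: respects_cut_reachable)
  moreover define E where "E = mat n n (\<lambda>(r, s). v i0 $ r * cnj (v j0 $ s))"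
  ultimately have "respects_cut n v ?P E"
    using full by (simp add: E_def)
  moreover have vi0: "v i0 \<in> carrier_vec n" using vc ij0 by simp
  moreover have "E *\<^sub>v v j0 = v i0"
  proof (intro eq_vecI)
    fix r assume "r < dim_vec (v i0)"
    with vi0 have "r < n" by simp
    then have "(E *\<^sub>v v j0) $ r = v i0 $ r * (\<Sum>s<n. v j0 $ s * cnj (v j0 $ s))"
      using vc ij0 by (simp add: E_def index_mult_mat_vec_sum[of _ n n] sum_distrib_left ac_simps
          del: index_mult_mat_vec)
    then show "(E *\<^sub>v v j0) $ r = v i0 $ r"
      using vc ij0 unit by (simp add: cscalar_prod_eq_sum[of _ n])
  qed (use vi0 in \<open>simp add: E_def\<close>)
  ultimately have "v i0 \<bullet>c v i0 = 0"
    using ij0 \<open>\<not> (conf_edge n v S)\<^sup>*\<^sup>* i0 j0\<close> unfolding respects_cut_def by force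
  with unit show False by simp
qed

section \<open>Vectorisation of matrices and stabilisation of powers\<close>

definition vec_of_mat :: "nat \<Rightarrow> 'a mat \<Rightarrow> 'a vec" where
  "vec_of_mat n X = vec (n * n) (\<lambda>k. X $$ (k div n, k mod n))"

definition mat_of_vec :: "nat \<Rightarrow> 'a vec \<Rightarrow> 'a mat" where
  "mat_of_vec n x = mat n n (\<lambda>(i, j). x $ (i * n + j))"

lemma index_lt_square:
  fixes i j n :: nat
  assumes "i < n" "j < n"
  shows "i * n + j < n * n"
proof -
  have "i * n + j < (i + 1) * n" using assms by simp
  also have "\<dots> \<le> n * n" using assms by (intro mult_le_mono1) simp
  finally show ?thesis .
qed

lemma div_mod_lt_square:
  fixes k n :: nat
  assumes "k < n * n"
  shows "k div n < n" "k mod n < n"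
proof -
  show "k div n < n" using assms by (simp add: less_mult_imp_div_less)
  have "n > 0" using assms by (cases n) auto
  then show "k mod n < n" by simp
qed

lemma sum_lessThan_mult_split:
  fixes f :: "nat \<Rightarrow> 'a::comm_monoid_add"
  shows "(\<Sum>k<m * n. f k) = (\<Sum>i<m. \<Sum>j<n. f (i * n + j))"
proof -
  have "(\<Sum>j<n. f (i * n + j)) = (\<Sum>k\<in>{i * n..<i * n + n}. f k)" for i
    using sum.atLeastLessThan_shift_bounds[of f 0 "i * n" n]
    by (simp add: atLeast0LessThan add.commute comp_def)
  then show ?thesis by (simp add: sum.nat_group)
qed

lemma vec_of_mat_dim [simp]: "dim_vec (vec_of_mat n X) = n * n"
  by (simp add: vec_of_mat_def)

lemma vec_of_mat_carrier [simp]: "vec_of_mat n X \<in> carrier_vec (n * n)"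
  by (simp add: carrier_vecI)

lemma mat_of_vec_dim [simp]: "dim_row (mat_of_vec n x) = n" "dim_col (mat_of_vec n x) = n"
  by (simp_all add: mat_of_vec_def)

lemma mat_of_vec_carrier [simp]: "mat_of_vec n x \<in> carrier_mat n n"
  by (simp add: carrier_matI)

lemma index_vec_of_mat: "k < n * n \<Longrightarrow> vec_of_mat n X $ k = X $$ (k div n, k mod n)"
  by (simp add: vec_of_mat_def)

lemma index_mat_of_vec: "i < n \<Longrightarrow> j < n \<Longrightarrow> mat_of_vec n x $$ (i, j) = x $ (i * n + j)"
  by (simp add: mat_of_vec_def)

lemma mat_of_vec_of_mat: "X \<in> carrier_mat n n \<Longrightarrow> mat_of_vec n (vec_of_mat n X) = X"
  by (intro eq_matI) (auto simp: index_mat_of_vec index_vec_of_mat index_lt_square)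

lemma vec_of_mat_of_vec: "x \<in> carrier_vec (n * n) \<Longrightarrow> vec_of_mat n (mat_of_vec n x) = x"
  by (intro eq_vecI) (auto simp: index_mat_of_vec index_vec_of_mat div_mod_lt_square)

lemma vec_of_mat_add:
  "X \<in> carrier_mat n n \<Longrightarrow> Y \<in> carrier_mat n n \<Longrightarrow>
    vec_of_mat n (X + Y) = vec_of_mat n X + vec_of_mat n Y"
  by (intro eq_vecI) (auto simp: index_vec_of_mat div_mod_lt_square)

lemma vec_of_mat_minus:
  "X \<in> carrier_mat n n \<Longrightarrow> Y \<in> carrier_mat n n \<Longrightarrow>
    vec_of_mat n (X - Y) = vec_of_mat n X - vec_of_mat n Y"
  by (intro eq_vecI) (auto simp: index_vec_of_mat div_mod_lt_square)

lemma vec_of_mat_smult: "X \<in> carrier_mat n n \<Longrightarrow> vec_of_mat n (c \<cdot>\<^sub>m X) = c \<cdot>\<^sub>v vec_of_mat n X"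
  by (intro eq_vecI) (auto simp: index_vec_of_mat div_mod_lt_square)

lemma vec_of_mat_zero: "vec_of_mat n (0\<^sub>m n n) = 0\<^sub>v (n * n)"
  by (intro eq_vecI) (auto simp: index_vec_of_mat div_mod_lt_square)

lemma vec_of_mat_inj:
  "X \<in> carrier_mat n n \<Longrightarrow> Y \<in> carrier_mat n n \<Longrightarrow> vec_of_mat n X = vec_of_mat n Y \<Longrightarrow> X = Y"
  by (metis mat_of_vec_of_mat)

lemma cscalar_prod_vec_of_mat:
  "vec_of_mat n X \<bullet>c vec_of_mat n Y = (\<Sum>i<n. \<Sum>j<n. X $$ (i, j) * cnj (Y $$ (i, j)))"
  by (simp add: cscalar_prod_eq_sum[of _ "n * n"] sum_lessThan_mult_split index_vec_of_mat
      index_lt_square)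

lemma cscalar_prod_vec_of_mat_mult_adjoint:
  fixes Z B a :: "complex mat"
  assumes Z: "Z \<in> carrier_mat n n" and B: "B \<in> carrier_mat n n" and a: "a \<in> carrier_mat n n"
  shows "vec_of_mat n (Z * a) \<bullet>c vec_of_mat n B
    = vec_of_mat n Z \<bullet>c vec_of_mat n (B * mat_adjoint a)"
proof -
  have aH: "mat_adjoint a \<in> carrier_mat n n" using a by (rule mat_adjoint_carrier)
  have "vec_of_mat n (Z * a) \<bullet>c vec_of_mat n B
      = (\<Sum>i<n. \<Sum>j<n. \<Sum>r<n. Z $$ (i, r) * a $$ (r, j) * cnj (B $$ (i, j)))"
    using Z a by (simp add: cscalar_prod_vec_of_mat index_mult_mat_sum[of _ n n] sum_distrib_right
        del: index_mult_mat(1))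
  also have "\<dots> = (\<Sum>i<n. \<Sum>r<n. \<Sum>j<n. Z $$ (i, r) * a $$ (r, j) * cnj (B $$ (i, j)))"
    by (intro sum.cong refl sum.swap)
  also have "\<dots> = vec_of_mat n Z \<bullet>c vec_of_mat n (B * mat_adjoint a)"
    using B aH by (simp add: cscalar_prod_vec_of_mat index_mult_mat_sum[of _ n n]
        index_mat_adjoint[OF a] sum_distrib_left mult_ac del: index_mult_mat(1))
  finally show ?thesis .
qed

lemma vec_subspace_vec_of_mat:
  assumes A: "mat_subspace n A"
  shows "vec_subspace (n * n) (vec_of_mat n ` A)"
  unfolding vec_subspace_def
proof (intro conjI ballI allI)
  have Ac: "A \<subseteq> carrier_mat n n" using A by (simp add: mat_subspace_def)
  show "vec_of_mat n ` A \<subseteq> carrier_vec (n * n)" by auto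
  show "0\<^sub>v (n * n) \<in> vec_of_mat n ` A"
    using A vec_of_mat_zero[of n, symmetric] by (auto simp: mat_subspace_def)
  show "x + y \<in> vec_of_mat n ` A" if "x \<in> vec_of_mat n ` A" "y \<in> vec_of_mat n ` A" for x y
    using that A Ac by (auto simp: mat_subspace_def vec_of_mat_add[symmetric] subset_iff)
  show "c \<cdot>\<^sub>v x \<in> vec_of_mat n ` A" if "x \<in> vec_of_mat n ` A" for c x
    using that A Ac by (auto simp: mat_subspace_def vec_of_mat_smult[symmetric] subset_iff)
qed

lemma mat_subspace_chain_stabilizes:
  assumes sub: "\<And>k. mat_subspace n (A k)" and mono: "\<And>k. A k \<subseteq> A (Suc k)"
  shows "\<exists>k. A (Suc k) = A k"
proof -
  obtain k where k: "vec_of_mat n ` A (Suc k) = vec_of_mat n ` A k"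
    using vec_subspace_chain_stabilizes[OF vec_subspace_vec_of_mat[OF sub], of "\<lambda>k. k"] mono
    by (metis image_mono)
  have "A (Suc k) \<subseteq> A k"
  proof
    fix X assume X: "X \<in> A (Suc k)"
    then obtain Y where Y: "Y \<in> A k" "vec_of_mat n X = vec_of_mat n Y" using k by blast
    have "X \<in> carrier_mat n n" "Y \<in> carrier_mat n n"
      using X Y sub[of k] sub[of "Suc k"] by (auto simp: mat_subspace_def)
    with Y show "X \<in> A k" using vec_of_mat_inj by metis
  qed
  then show ?thesis using mono by blast
qed

lemma mat_span_carrier:
  assumes "T \<subseteq> carrier_mat n n"
  shows "mat_span n T \<subseteq> carrier_mat n n"
proof
  fix X assume "X \<in> mat_span n T"
  then show "X \<in> carrier_mat n n" by (induction rule: mat_span.induct) (use assms in auto)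
qed

lemma mat_subspace_mat_span: "T \<subseteq> carrier_mat n n \<Longrightarrow> mat_subspace n (mat_span n T)"
  by (simp add: mat_subspace_def mat_span_carrier mat_span.zero mat_span.add mat_span.smult)

lemma qg_pow_carrier:
  assumes "quantum_graph n S"
  shows "qg_pow n S k \<subseteq> carrier_mat n n"
proof (induction k)
  case 0
  then show ?case using assms by (simp add: quantum_graph_def mat_subspace_def)
next
  case (Suc k)
  have "S \<subseteq> carrier_mat n n" using assms by (simp add: quantum_graph_def mat_subspace_def)
  with Suc have "{A * B |A B. A \<in> qg_pow n S k \<and> B \<in> S} \<subseteq> carrier_mat n n"
    by (blast intro: mult_carrier_mat)
  then show ?case by (simp add: mat_span_carrier)
qed

lemma mat_subspace_qg_pow:
  assumes "quantum_graph n S"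
  shows "mat_subspace n (qg_pow n S k)"
proof (cases k)
  case 0
  then show ?thesis using assms by (simp add: quantum_graph_def)
next
  case (Suc k)
  have "S \<subseteq> carrier_mat n n" using assms by (simp add: quantum_graph_def mat_subspace_def)
  with qg_pow_carrier[OF assms, of k]
  have "{A * B |A B. A \<in> qg_pow n S k \<and> B \<in> S} \<subseteq> carrier_mat n n"
    by (blast intro: mult_carrier_mat)
  then show ?thesis using Suc by (simp add: mat_subspace_mat_span)
qed

lemma qg_pow_mono:
  assumes "quantum_graph n S"
  shows "qg_pow n S k \<subseteq> qg_pow n S (Suc k)"
proof
  fix X assume X: "X \<in> qg_pow n S k"
  then have "X \<in> carrier_mat n n" using qg_pow_carrier[OF assms] by blast
  then have "X = X * 1\<^sub>m n" by simp
  moreover have "1\<^sub>m n \<in> S" using assms by (simp add: quantum_graph_def)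
  ultimately have "X \<in> {A * B |A B. A \<in> qg_pow n S k \<and> B \<in> S}" using X by blast
  then show "X \<in> qg_pow n S (Suc k)" unfolding qg_pow.simps by (rule mat_span.gen)
qed

lemma subset_qg_pow:
  assumes "quantum_graph n S"
  shows "S \<subseteq> qg_pow n S k"
proof (induction k)
  case (Suc k)
  then show ?case using qg_pow_mono[OF assms, of k] by blast
qed simp

lemma qg_pow_stabilizes:
  assumes "quantum_graph n S"
  obtains k where "qg_pow n S (Suc k) = qg_pow n S k"
  using mat_subspace_chain_stabilizes[of n "qg_pow n S", OF mat_subspace_qg_pow[OF assms]
      qg_pow_mono[OF assms]] that by blast

lemma qg_pow_stable_mult_closed:
  assumes "qg_pow n S (Suc k) = qg_pow n S k" "X \<in> qg_pow n S k" "a \<in> S"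
  shows "X * a \<in> qg_pow n S k"
proof -
  have "X * a \<in> mat_span n {A * B |A B. A \<in> qg_pow n S k \<and> B \<in> S}"
    using assms(2,3) by (blast intro: mat_span.gen)
  then show ?thesis using assms(1) by simp
qed

section \<open>Orthogonal projection onto a right module\<close>

(* Every linear map on n x n matrices has this form; an orthogonal projection is handled through
   its kernel K, which makes its linearity and its values on matrix units explicit. *)
definition kernel_map :: "nat \<Rightarrow> (nat \<Rightarrow> nat \<Rightarrow> nat \<Rightarrow> nat \<Rightarrow> complex) \<Rightarrow> complex mat \<Rightarrow> complex mat" where
  "kernel_map n K X = mat n n (\<lambda>(l, j). \<Sum>p<n. \<Sum>q<n. X $$ (p, q) * K l j p q)"

lemma kernel_map_carrier [simp]: "kernel_map n K X \<in> carrier_mat n n"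
  by (simp add: kernel_map_def)

lemma kernel_map_dim [simp]: "dim_row (kernel_map n K X) = n" "dim_col (kernel_map n K X) = n"
  by (simp_all add: kernel_map_def)

lemma index_kernel_map:
  "l < n \<Longrightarrow> j < n \<Longrightarrow> kernel_map n K X $$ (l, j) = (\<Sum>p<n. \<Sum>q<n. X $$ (p, q) * K l j p q)"
  by (simp add: kernel_map_def)

lemma kernel_map_add:
  assumes "X \<in> carrier_mat n n" "Y \<in> carrier_mat n n"
  shows "kernel_map n K (X + Y) = kernel_map n K X + kernel_map n K Y"
  using assms by (intro eq_matI) (auto simp: index_kernel_map distrib_right sum.distrib)

definition orth_proj_kernel ::
    "nat \<Rightarrow> complex mat set \<Rightarrow> (nat \<Rightarrow> nat \<Rightarrow> nat \<Rightarrow> nat \<Rightarrow> complex) \<Rightarrow> bool" where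
  "orth_proj_kernel n A K \<longleftrightarrow> (\<forall>X. kernel_map n K X \<in> A) \<and> (\<forall>Y\<in>A. kernel_map n K Y = Y)
     \<and> (\<forall>X\<in>carrier_mat n n. \<forall>B\<in>A. vec_of_mat n (X - kernel_map n K X) \<bullet>c vec_of_mat n B = 0)"

lemma kernel_map_eq_orth_proj:
  assumes F: "\<forall>i<m. F i \<in> carrier_vec (n * n)"
  shows "kernel_map n (\<lambda>l j p q. \<Sum>i<m. cnj (F i $ (p * n + q)) * F i $ (l * n + j)) X
    = mat_of_vec n (orth_proj (n * n) m F (vec_of_mat n X))"
proof (intro eq_matI)
  fix l j assume "l < dim_row (mat_of_vec n (orth_proj (n * n) m F (vec_of_mat n X)))"
    "j < dim_col (mat_of_vec n (orth_proj (n * n) m F (vec_of_mat n X)))"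
  then have lj: "l < n" "j < n" by simp_all
  have "mat_of_vec n (orth_proj (n * n) m F (vec_of_mat n X)) $$ (l, j)
      = (\<Sum>i<m. (\<Sum>k<n * n. vec_of_mat n X $ k * cnj (F i $ k)) * F i $ (l * n + j))"
    using lj F
    by (simp add: index_mat_of_vec orth_proj_def index_lt_square cscalar_prod_eq_sum[of _ "n * n"])
  also have "\<dots> = (\<Sum>k<n * n. \<Sum>i<m. vec_of_mat n X $ k * (cnj (F i $ k) * F i $ (l * n + j)))"
    by (simp add: sum_distrib_right mult.assoc sum.swap[of _ "{..<m}"])
  finally show "kernel_map n (\<lambda>l j p q. \<Sum>i<m. cnj (F i $ (p * n + q)) * F i $ (l * n + j)) X
      $$ (l, j) = mat_of_vec n (orth_proj (n * n) m F (vec_of_mat n X)) $$ (l, j)"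
    using lj by (simp add: index_kernel_map sum_lessThan_mult_split index_vec_of_mat index_lt_square
        sum_distrib_left)
qed simp_all

lemma orth_proj_kernel_exists:
  assumes A: "mat_subspace n A"
  obtains K where "orth_proj_kernel n A K"
proof -
  let ?V = "vec_of_mat n ` A"
  have V: "vec_subspace (n * n) ?V" using vec_subspace_vec_of_mat[OF A] .
  obtain m F where F: "orthonormal_family (n * n) m F" "\<forall>i<m. F i \<in> ?V"
    "\<forall>x\<in>?V. orth_proj (n * n) m F x = x"
    using vec_subspace_orthonormal_basis[OF V] .
  have Fc: "\<forall>i<m. F i \<in> carrier_vec (n * n)" using F(1) by (simp add: orthonormal_family_def)
  have Ac: "A \<subseteq> carrier_mat n n" using A by (simp add: mat_subspace_def)
  define K where "K l j p q = (\<Sum>i<m. cnj (F i $ (p * n + q)) * F i $ (l * n + j))" for l j p q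
  have proj: "kernel_map n K X = mat_of_vec n (orth_proj (n * n) m F (vec_of_mat n X))" for X
    unfolding K_def by (rule kernel_map_eq_orth_proj[OF Fc])
  have "kernel_map n K X \<in> A" for X
  proof -
    obtain Y where "Y \<in> A" "orth_proj (n * n) m F (vec_of_mat n X) = vec_of_mat n Y"
      using orth_proj_in_subspace[OF V F(2)] by blast
    then show ?thesis using Ac by (auto simp: proj mat_of_vec_of_mat)
  qed
  moreover have "kernel_map n K Y = Y" if "Y \<in> A" for Y
    using that F(3) Ac by (auto simp: proj mat_of_vec_of_mat)
  moreover have "vec_of_mat n (X - kernel_map n K X) \<bullet>c vec_of_mat n B = 0"
    if "X \<in> carrier_mat n n" "B \<in> A" for X B
    using that F(3) Ac
    by (auto simp: proj vec_of_mat_minus vec_of_mat_of_vec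
        intro!: orth_proj_residual_orthogonal_fixed[OF F(1)])
  ultimately have "orth_proj_kernel n A K" unfolding orth_proj_kernel_def by blast
  then show ?thesis by (rule that)
qed

lemma orth_proj_kernel_orthogonal:
  assumes K: "orth_proj_kernel n A K" and W: "W \<in> carrier_mat n n"
    and orth: "\<forall>B\<in>A. vec_of_mat n W \<bullet>c vec_of_mat n B = 0"
  shows "kernel_map n K W = 0\<^sub>m n n"
proof -
  let ?P = "kernel_map n K W"
  have "?P \<in> A" using K by (simp add: orth_proj_kernel_def)
  then have "vec_of_mat n (W - ?P) \<bullet>c vec_of_mat n ?P = 0" "vec_of_mat n W \<bullet>c vec_of_mat n ?P = 0"
    using K W orth by (simp_all add: orth_proj_kernel_def)
  then have "vec_of_mat n ?P \<bullet>c vec_of_mat n ?P = 0"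
    using W by (simp add: vec_of_mat_minus cscalar_prod_minus_left[of _ "n * n"])
  then have "vec_of_mat n ?P = vec_of_mat n (0\<^sub>m n n)"
    by (simp add: vec_of_mat_zero conjugate_square_eq_0_vec[OF vec_of_mat_carrier])
  then show ?thesis using vec_of_mat_inj by (metis kernel_map_carrier zero_carrier_mat)
qed

lemma orth_proj_kernel_right_mult:
  assumes K: "orth_proj_kernel n A K" and A: "mat_subspace n A"
    and S: "S \<subseteq> carrier_mat n n" "\<forall>a\<in>S. mat_adjoint a \<in> S" and closed: "\<forall>X\<in>A. \<forall>a\<in>S. X * a \<in> A"
    and X: "X \<in> carrier_mat n n" and a: "a \<in> S"
  shows "kernel_map n K (X * a) = kernel_map n K X * a"
proof -
  let ?P = "kernel_map n K"
  define Z where "Z = X - ?P X"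
  have ac: "a \<in> carrier_mat n n" and Zc: "Z \<in> carrier_mat n n" using S a X by (auto simp: Z_def)
  have "X = ?P X + Z" using X by (auto simp: Z_def)
  then have "X * a = ?P X * a + Z * a"
    using ac Zc by (metis add_mult_distrib_mat kernel_map_carrier)
  then have "?P (X * a) = ?P (?P X * a) + ?P (Z * a)"
    using kernel_map_add[OF mult_carrier_mat[OF kernel_map_carrier ac] mult_carrier_mat[OF Zc ac]]
    by simp
  moreover have "?P (?P X * a) = ?P X * a"
    using K closed a by (simp add: orth_proj_kernel_def)
  \<comment> \<open>Z is orthogonal to A, and so is Z * a, whose inner product with B is that of Z with
    B * mat_adjoint a.\<close>
  moreover have "?P (Z * a) = 0\<^sub>m n n"
  proof (rule orth_proj_kernel_orthogonal[OF K])
    show "\<forall>B\<in>A. vec_of_mat n (Z * a) \<bullet>c vec_of_mat n B = 0"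
    proof
      fix B assume B: "B \<in> A"
      then have Bc: "B \<in> carrier_mat n n" using A by (auto simp: mat_subspace_def)
      have "B * mat_adjoint a \<in> A" using B closed S a by blast
      then have "vec_of_mat n Z \<bullet>c vec_of_mat n (B * mat_adjoint a) = 0"
        using K X by (simp add: orth_proj_kernel_def Z_def)
      then show "vec_of_mat n (Z * a) \<bullet>c vec_of_mat n B = 0"
        by (simp add: cscalar_prod_vec_of_mat_mult_adjoint[OF Zc Bc ac])
    qed
  qed (use Zc ac in simp)
  ultimately show ?thesis
    using mult_carrier_mat[OF kernel_map_carrier ac] by simp
qed

definition mat_unit :: "nat \<Rightarrow> nat \<Rightarrow> nat \<Rightarrow> complex mat" where
  "mat_unit n k i = mat n n (\<lambda>(p, q). if p = k \<and> q = i then 1 else 0)"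

lemma mat_unit_carrier [simp]: "mat_unit n k i \<in> carrier_mat n n"
  by (simp add: mat_unit_def)

lemma index_kernel_map_mat_unit:
  assumes "k < n" "i < n" "l < n" "j < n"
  shows "kernel_map n K (mat_unit n k i) $$ (l, j) = K l j k i"
proof -
  have "(\<Sum>q<n. mat_unit n k i $$ (p, q) * K l j p q) = (if p = k then K l j k i else 0)"
    if "p < n" for p
    using assms that
    by (cases "p = k") (simp_all add: mat_unit_def if_distrib[of "\<lambda>x. x * _"] cong: if_cong)
  then show ?thesis using assms by (simp add: index_kernel_map)
qed

lemma index_mat_unit_mult:
  assumes a: "a \<in> carrier_mat n n" and "i < n" "p < n" "q < n"
  shows "(mat_unit n k i * a) $$ (p, q) = (if p = k then a $$ (i, q) else 0)"
proof -
  have "(mat_unit n k i * a) $$ (p, q) = (\<Sum>r<n. mat_unit n k i $$ (p, r) * a $$ (r, q))"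
    using assms by (intro index_mult_mat_sum[OF mat_unit_carrier a])
  then show ?thesis
    using assms
    by (cases "p = k") (simp_all add: mat_unit_def if_distrib[of "\<lambda>x. x * _"] cong: if_cong)
qed

(* The matrix (i, j) |-> K l j k i collects the entries (l, j) of the images of the matrix units
   mat_unit n k i. *)
lemma kernel_map_right_linear_commutant:
  assumes right: "\<And>X a. X \<in> carrier_mat n n \<Longrightarrow> a \<in> S \<Longrightarrow> kernel_map n K (X * a) = kernel_map n K X * a"
    and S: "S \<subseteq> carrier_mat n n" and kl: "k < n" "l < n" and a: "a \<in> S"
  shows "mat n n (\<lambda>(i, j). K l j k i) * a = a * mat n n (\<lambda>(i, j). K l j k i)"
proof (rule eq_matI)
  let ?M = "mat n n (\<lambda>(i, j). K l j k i)"
  have ac: "a \<in> carrier_mat n n" using S a by auto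
  fix i j assume "i < dim_row (a * ?M)" "j < dim_col (a * ?M)"
  then have ij: "i < n" "j < n" using ac by auto
  have "(?M * a) $$ (i, j) = (\<Sum>q<n. K l q k i * a $$ (q, j))"
    using ij ac by (simp add: index_mult_mat_sum[of _ n n _ n] del: index_mult_mat(1))
  also have "\<dots> = (kernel_map n K (mat_unit n k i) * a) $$ (l, j)"
    using ij kl ac
    by (simp add: index_mult_mat_sum[of _ n n _ n] index_kernel_map_mat_unit del: index_mult_mat(1))
  also have "\<dots> = kernel_map n K (mat_unit n k i * a) $$ (l, j)"
    using right[OF mat_unit_carrier a] by simp
  also have "\<dots> = (\<Sum>q<n. a $$ (i, q) * K l j k q)"
  proof -
    have "(\<Sum>q<n. (mat_unit n k i * a) $$ (p, q) * K l j p q)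
        = (if p = k then \<Sum>q<n. a $$ (i, q) * K l j k q else 0)" if "p < n" for p
      using ij ac that by (cases "p = k") (simp_all add: index_mat_unit_mult)
    then show ?thesis using ij kl by (simp add: index_kernel_map)
  qed
  also have "\<dots> = (a * ?M) $$ (i, j)"
    using ij ac by (simp add: index_mult_mat_sum[of _ n n _ n] del: index_mult_mat(1))
  finally show "(?M * a) $$ (i, j) = (a * ?M) $$ (i, j)" .
qed (use S a in auto)

lemma kernel_map_eq_self_if_scalar_blocks:
  assumes scalar: "\<forall>k<n. \<forall>l<n. \<exists>c. mat n n (\<lambda>(i, j). K l j k i) = c \<cdot>\<^sub>m 1\<^sub>m n"
    and unital: "kernel_map n K (1\<^sub>m n) = 1\<^sub>m n" and X: "X \<in> carrier_mat n n"
  shows "kernel_map n K X = X"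
proof -
  define c where "c k l = (SOME c. mat n n (\<lambda>(i, j). K l j k i) = c \<cdot>\<^sub>m 1\<^sub>m n)" for k l
  have c: "mat n n (\<lambda>(i, j). K l j k i) = c k l \<cdot>\<^sub>m 1\<^sub>m n" if "k < n" "l < n" for k l
    unfolding c_def by (rule someI_ex) (use scalar that in blast)
  have K: "K l j p q = (if q = j then c p l else 0)" if "l < n" "j < n" "p < n" "q < n" for l j p q
  proof -
    have "K l j p q = mat n n (\<lambda>(i, j). K l j p i) $$ (q, j)" using that by simp
    then show ?thesis using c[of p l] that by simp
  qed
  have entry: "kernel_map n K Y $$ (l, j) = (\<Sum>p<n. Y $$ (p, j) * c p l)"
    if "l < n" "j < n" for Y l j
    using that by (simp add: index_kernel_map K if_distrib[of "(*) _"] cong: if_cong)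
  have "c j l = (if l = j then 1 else 0)" if "l < n" "j < n" for l j
    using entry[of l j "1\<^sub>m n"] unital that by (simp add: if_distrib[of "\<lambda>x. x * _"] cong: if_cong)
  then show ?thesis
    using X by (intro eq_matI) (auto simp: entry if_distrib[of "(*) _"] cong: if_cong)
qed

lemma right_module_full_or_commutant:
  assumes S: "S \<subseteq> carrier_mat n n" "\<forall>a\<in>S. mat_adjoint a \<in> S"
    and A: "mat_subspace n A" and closed: "\<forall>X\<in>A. \<forall>a\<in>S. X * a \<in> A" and unital: "1\<^sub>m n \<in> A"
  shows "A = carrier_mat n n \<or> (\<exists>M\<in>carrier_mat n n. (\<forall>a\<in>S. M * a = a * M) \<and> (\<nexists>c. M = c \<cdot>\<^sub>m 1\<^sub>m n))"
proof -
  obtain K where K: "orth_proj_kernel n A K" using orth_proj_kernel_exists[OF A] .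
  have right: "kernel_map n K (X * a) = kernel_map n K X * a"
    if "X \<in> carrier_mat n n" "a \<in> S" for X a
    using orth_proj_kernel_right_mult[OF K A S closed that] .
  show ?thesis
  proof (cases "\<forall>k<n. \<forall>l<n. \<exists>c. mat n n (\<lambda>(i, j). K l j k i) = c \<cdot>\<^sub>m 1\<^sub>m n")
    case True
    have "kernel_map n K (1\<^sub>m n) = 1\<^sub>m n" using K unital by (simp add: orth_proj_kernel_def)
    then have "kernel_map n K X = X" if "X \<in> carrier_mat n n" for X
      using kernel_map_eq_self_if_scalar_blocks[OF True _ that] by blast
    then have "X \<in> A" if "X \<in> carrier_mat n n" for X
      using K that by (metis orth_proj_kernel_def)
    moreover have "A \<subseteq> carrier_mat n n" using A by (simp add: mat_subspace_def)
    ultimately show ?thesis by blast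
  next
    case False
    then obtain k l where "k < n" "l < n" "\<nexists>c. mat n n (\<lambda>(i, j). K l j k i) = c \<cdot>\<^sub>m 1\<^sub>m n"
      by blast
    with kernel_map_right_linear_commutant[OF right S(1)] show ?thesis
      by (intro disjI2 bexI[of _ "mat n n (\<lambda>(i, j). K l j k i)"]) auto
  qed
qed

section \<open>A nonscalar commutant disconnects some confusability graph\<close>

lemma vec_subspace_eigenspace:
  assumes M: "M \<in> carrier_mat n n"
  shows "vec_subspace n {x \<in> carrier_vec n. M *\<^sub>v x = \<mu> \<cdot>\<^sub>v x}"
  unfolding vec_subspace_def
proof (intro conjI ballI allI)
  show "x + y \<in> {x \<in> carrier_vec n. M *\<^sub>v x = \<mu> \<cdot>\<^sub>v x}"
    if "x \<in> {x \<in> carrier_vec n. M *\<^sub>v x = \<mu> \<cdot>\<^sub>v x}" "y \<in> {x \<in> carrier_vec n. M *\<^sub>v x = \<mu> \<cdot>\<^sub>v x}"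
    for x y
    using that M by (simp add: mult_add_distrib_mat_vec[of _ n n] smult_add_distrib_vec[of _ n])
  show "c \<cdot>\<^sub>v x \<in> {x \<in> carrier_vec n. M *\<^sub>v x = \<mu> \<cdot>\<^sub>v x}"
    if "x \<in> {x \<in> carrier_vec n. M *\<^sub>v x = \<mu> \<cdot>\<^sub>v x}" for c x
    using that M by (simp add: mult_mat_vec smult_smult_assoc mult.commute)
qed (use M in auto)

lemma mat_eq_smult_one_if_eigen_everywhere:
  fixes M :: "complex mat"
  assumes M: "M \<in> carrier_mat n n" and eigen: "\<forall>x\<in>carrier_vec n. M *\<^sub>v x = \<mu> \<cdot>\<^sub>v x"
  shows "M = \<mu> \<cdot>\<^sub>m 1\<^sub>m n"
proof (rule eq_matI)
  fix i j assume "i < dim_row (\<mu> \<cdot>\<^sub>m 1\<^sub>m n)" "j < dim_col (\<mu> \<cdot>\<^sub>m 1\<^sub>m n)"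
  then have ij: "i < n" "j < n" by simp_all
  have "M $$ (i, j) = (M *\<^sub>v unit_vec n j) $ i" using M ij by simp
  then show "M $$ (i, j) = (\<mu> \<cdot>\<^sub>m 1\<^sub>m n) $$ (i, j)" using eigen ij by simp
qed (use M in simp_all)

lemma commuting_preserves_eigenspace:
  fixes M a :: "complex mat"
  assumes M: "M \<in> carrier_mat n n" and a: "a \<in> carrier_mat n n" and comm: "M * a = a * M"
    and w: "w \<in> carrier_vec n" "M *\<^sub>v w = \<mu> \<cdot>\<^sub>v w"
  shows "M *\<^sub>v (a *\<^sub>v w) = \<mu> \<cdot>\<^sub>v (a *\<^sub>v w)"
proof -
  have "M *\<^sub>v (a *\<^sub>v w) = (M * a) *\<^sub>v w" using a w M by simp
  also have "\<dots> = a *\<^sub>v (M *\<^sub>v w)" using comm a w M by simp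
  also have "\<dots> = \<mu> \<cdot>\<^sub>v (a *\<^sub>v w)" using a w by (simp add: mult_mat_vec)
  finally show ?thesis .
qed

lemma nonscalar_commutant_invariant_subspace:
  assumes S: "S \<subseteq> carrier_mat n n" and M: "M \<in> carrier_mat n n"
    and comm: "\<forall>a\<in>S. M * a = a * M" and nonscalar: "\<nexists>c. M = c \<cdot>\<^sub>m 1\<^sub>m n"
  obtains W where "vec_subspace n W" "\<exists>w\<in>W. w \<noteq> 0\<^sub>v n" "\<exists>x\<in>carrier_vec n. x \<notin> W"
    "\<forall>a\<in>S. \<forall>w\<in>W. a *\<^sub>v w \<in> W"
proof -
  have "n > 0"
  proof (rule ccontr)
    assume "\<not> n > 0"
    then have "M = 0 \<cdot>\<^sub>m 1\<^sub>m n" using M by (intro eq_matI) auto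
    then show False using nonscalar by blast
  qed
  then obtain \<mu> where "\<mu> \<in> spectrum M" using spectrum_non_empty[OF M] by blast
  then obtain e where e: "e \<in> carrier_vec n" "e \<noteq> 0\<^sub>v n" "M *\<^sub>v e = \<mu> \<cdot>\<^sub>v e"
    using M by (auto simp: spectrum_def eigenvalue_def eigenvector_def)
  let ?W = "{x \<in> carrier_vec n. M *\<^sub>v x = \<mu> \<cdot>\<^sub>v x}"
  have "\<exists>x\<in>carrier_vec n. x \<notin> ?W"
    using mat_eq_smult_one_if_eigen_everywhere[OF M] nonscalar by blast
  moreover have "\<forall>a\<in>S. \<forall>w\<in>?W. a *\<^sub>v w \<in> ?W"
    using commuting_preserves_eigenspace[OF M] comm S by auto
  ultimately show ?thesis
    using that vec_subspace_eigenspace[OF M] e by blast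
qed

lemma invariant_subspace_conf_disconnected:
  assumes S: "S \<subseteq> carrier_mat n n" "\<forall>a\<in>S. mat_adjoint a \<in> S"
    and W: "vec_subspace n W" "w \<in> W" "w \<noteq> 0\<^sub>v n" "x \<in> carrier_vec n" "x \<notin> W"
    and invariant: "\<forall>a\<in>S. \<forall>y\<in>W. a *\<^sub>v y \<in> W"
  shows "\<exists>v. orthonormal_basis n v \<and> \<not> graph_connected n (conf_edge n v S)"
proof -
  obtain k v where v: "orthonormal_basis n v" "k \<le> n" "\<forall>i<k. v i \<in> W"
    "\<forall>y\<in>W. orth_proj n k v y = y" "\<forall>y\<in>carrier_vec n. orth_proj n n v y = y"
    using orthonormal_basis_adapted[OF W(1)] .
  have vc: "\<forall>i<n. v i \<in> carrier_vec n" using v(1) by (simp add: orthonormal_basis_def)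
  have "k \<noteq> 0" using v(4) W(2,3) by (auto simp: orth_proj_0)
  moreover have "k \<noteq> n" using v(3,5) W(4,5) orth_proj_in_subspace[OF W(1), of k v] by metis
  ultimately have k: "0 < k" "k < n" using v(2) by simp_all
  have perp: "v j \<bullet>c y = 0" if "k \<le> j" "j < n" "y \<in> W" for j y
  proof -
    have "v j \<bullet>c y = v j \<bullet>c orth_proj n k v y" using v(4) that by simp
    also have "\<dots> = 0"
      using that v(1) vc k by (auto simp: cscalar_prod_orth_proj_right orthonormal_basis_def
          intro!: sum.neutral)
    finally show ?thesis .
  qed
  have "j < k" if "(conf_edge n v S)\<^sup>*\<^sup>* 0 j" for j
    using that
  proof (induction rule: rtranclp_induct)
    case base
    then show ?case using k by simp
  next
    case (step i j)
    then obtain a where a: "a \<in> S" "j < n" "(a *\<^sub>v v j) \<bullet>c v i \<noteq> 0"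
      by (auto simp: conf_edge_def)
    have "(a *\<^sub>v v j) \<bullet>c v i = v j \<bullet>c (mat_adjoint a *\<^sub>v v i)"
      using a S vc step.IH k by (intro cscalar_prod_mat_adjoint) auto
    moreover have "mat_adjoint a *\<^sub>v v i \<in> W" using invariant S(2) a(1) v(3) step.IH by blast
    ultimately show ?case using perp[of j] a(2,3) by (metis not_le)
  qed
  then have "\<not> graph_connected n (conf_edge n v S)"
    using k unfolding graph_connected_def by blast
  with v(1) show ?thesis by blast
qed

lemma nonscalar_commutant_conf_disconnected:
  assumes S: "S \<subseteq> carrier_mat n n" "\<forall>a\<in>S. mat_adjoint a \<in> S" and M: "M \<in> carrier_mat n n"
    and comm: "\<forall>a\<in>S. M * a = a * M" and nonscalar: "\<nexists>c. M = c \<cdot>\<^sub>m 1\<^sub>m n"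
  shows "\<exists>v. orthonormal_basis n v \<and> \<not> graph_connected n (conf_edge n v S)"
proof -
  obtain W where "vec_subspace n W" "\<exists>w\<in>W. w \<noteq> 0\<^sub>v n" "\<exists>x\<in>carrier_vec n. x \<notin> W"
    "\<forall>a\<in>S. \<forall>w\<in>W. a *\<^sub>v w \<in> W"
    using nonscalar_commutant_invariant_subspace[OF S(1) M comm nonscalar] .
  then show ?thesis using invariant_subspace_conf_disconnected[OF S] by blast
qed

theorem proposition3p6:
  fixes n :: nat and S :: "complex mat set"
  assumes "quantum_graph n S"
  shows "qg_connected n S \<longleftrightarrow>
           (\<forall>v. orthonormal_basis n v \<longrightarrow> graph_connected n (conf_edge n v S))"
proof
  assume "qg_connected n S"
  then show "\<forall>v. orthonormal_basis n v \<longrightarrow> graph_connected n (conf_edge n v S)"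
    using qg_connected_imp_conf_connected[OF assms] unfolding qg_connected_def by blast
next
  assume connected: "\<forall>v. orthonormal_basis n v \<longrightarrow> graph_connected n (conf_edge n v S)"
  have S: "S \<subseteq> carrier_mat n n" "\<forall>a\<in>S. mat_adjoint a \<in> S" "1\<^sub>m n \<in> S"
    using assms by (simp_all add: quantum_graph_def mat_subspace_def)
  obtain k where stable: "qg_pow n S (Suc k) = qg_pow n S k"
    using qg_pow_stabilizes[OF assms] .
  have "qg_pow n S k = carrier_mat n n \<or>
      (\<exists>M\<in>carrier_mat n n. (\<forall>a\<in>S. M * a = a * M) \<and> (\<nexists>c. M = c \<cdot>\<^sub>m 1\<^sub>m n))"
    using right_module_full_or_commutant[OF S(1,2) mat_subspace_qg_pow[OF assms]]
      qg_pow_stable_mult_closed[OF stable] subset_qg_pow[OF assms] S(3) by blast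
  moreover have "\<nexists>M. M \<in> carrier_mat n n \<and> (\<forall>a\<in>S. M * a = a * M) \<and> (\<nexists>c. M = c \<cdot>\<^sub>m 1\<^sub>m n)"
    using nonscalar_commutant_conf_disconnected[OF S(1,2)] connected by blast
  ultimately show "qg_connected n S" unfolding qg_connected_def by blast
qed

end
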